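(* Let $\rho_1(dx)=q_1(x)\,dx$ be a probability distribution on $\mathbb{R}_+$ whose density $q_1$ is continuous with compact support, and let $\rho_2$ be a probability distribution on $\mathbb{R}_+$ with $\rho_2\in\mathcal{S}_{loc}$. Then $\rho_1*\rho_2(dx)=\left(\int_{0-}^{x+}q_1(x-u)\,\rho_2(du)\right)dx$ and the density $x\mapsto\int_{0-}^{x+}q_1(x-u)\,\rho_2(du)$ belongs to $\mathcal{S}_d$.
   Context: For positive functions $f,g$ defined on some $[a,\infty)$, $f(x)\sim g(x)$ means $\lim_{x\to\infty}f(x)/g(x)=1$. A density function is a measurable $g:\mathbb{R}\to[0,\infty)$ with $\int g=1$. For integrable $f,g$, $f\otimes g(x):=\int f(x-u)g(u)\,du$; $\eta*\rho$ denotes convolution of measures. The class $\mathbf{L}$ consists of nonnegative measurable $g$ on $\mathbb{R}$ with $g(x)>0$ for all sufficiently large $x$ and $g(x+a)\sim g(x)$ for every $a\in\mathbb{R}$. $\mathcal{L}_d$ is the set of density functions in $\mathbf{L}$; $\mathcal{S}_d$ is the set of $g\in\mathcal{L}_d$ with $g\otimes g(x)\sim 2g(x)$. For $\Delta=(0,c]$, $c>0$: a distribution $\rho$ belongs to $\mathcal{L}_\Delta$ if $x\mapsto\rho((x,x+c])$ belongs to $\mathbf{L}$, and to $\mathcal{S}_\Delta$ if moreover $\rho*\rho((x,x+c])\sim 2\rho((x,x+c])$. $\mathcal{S}_{loc}$ is the class of distributions belonging to $\mathcal{S}_\Delta$ for every $\Delta=(0,c]$, $c>0$. *)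

theory Defs
  imports "HOL-Probability.Probability"
begin

definition asymp_eq :: "(real \<Rightarrow> real) \<Rightarrow> (real \<Rightarrow> real) \<Rightarrow> bool" where
  "asymp_eq f g \<longleftrightarrow> ((\<lambda>x. f x / g x) \<longlongrightarrow> 1) at_top"

definition density_function :: "(real \<Rightarrow> real) \<Rightarrow> bool" where
  "density_function g \<longleftrightarrow> g \<in> borel_measurable borel \<and> (\<forall>x. 0 \<le> g x) \<and>
     (\<integral>\<^sup>+ x. ennreal (g x) \<partial>lborel) = 1"

definition fconv :: "(real \<Rightarrow> real) \<Rightarrow> (real \<Rightarrow> real) \<Rightarrow> real \<Rightarrow> real" where
  "fconv f g x = (\<integral> u. f (x - u) * g u \<partial>lborel)"

definition class_L :: "(real \<Rightarrow> real) \<Rightarrow> bool" where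
  "class_L g \<longleftrightarrow> g \<in> borel_measurable borel \<and> (\<forall>x. 0 \<le> g x) \<and>
     (\<forall>\<^sub>F x in at_top. 0 < g x) \<and> (\<forall>a. asymp_eq (\<lambda>x. g (x + a)) g)"

definition class_L_d :: "(real \<Rightarrow> real) \<Rightarrow> bool" where
  "class_L_d g \<longleftrightarrow> density_function g \<and> class_L g"

definition class_S_d :: "(real \<Rightarrow> real) \<Rightarrow> bool" where
  "class_S_d g \<longleftrightarrow> class_L_d g \<and> asymp_eq (fconv g g) (\<lambda>x. 2 * g x)"

definition class_L_Delta :: "real \<Rightarrow> real measure \<Rightarrow> bool" where
  "class_L_Delta c \<rho> \<longleftrightarrow> class_L (\<lambda>x. measure \<rho> {x<..x + c})"

definition class_S_Delta :: "real \<Rightarrow> real measure \<Rightarrow> bool" where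
  "class_S_Delta c \<rho> \<longleftrightarrow> class_L_Delta c \<rho> \<and>
     asymp_eq (\<lambda>x. measure (\<rho> \<star> \<rho>) {x<..x + c}) (\<lambda>x. 2 * measure \<rho> {x<..x + c})"

definition class_S_loc :: "real measure \<Rightarrow> bool" where
  "class_S_loc \<rho> \<longleftrightarrow> (\<forall>c>0. class_S_Delta c \<rho>)"

definition distr_Rplus :: "real measure \<Rightarrow> bool" where
  "distr_Rplus \<rho> \<longleftrightarrow> prob_space \<rho> \<and> sets \<rho> = sets borel \<and> emeasure \<rho> {..<0} = 0"

end

theory Submission
  imports Defs
begin

text \<open>Write \<open>g(x) = \<integral> q\<^sub>1(x - u) \<rho>\<^sub>2(du)\<close>. Approximating \<open>q\<^sub>1\<close> by a step function on cells of
  small length \<open>h\<close> turns \<open>g(x)\<close> into a Riemann-type sum of masses \<open>\<rho>\<^sub>2\<close> gives to windows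
  \<open>(x + a, x + a + h]\<close>; local long-tailedness makes all these comparable to \<open>\<rho>\<^sub>2(x, x + h]\<close>,
  so \<open>g(x) \<approx> \<rho>\<^sub>2(x, x + h] / h\<close> up to a factor \<open>1 \<pm> \<epsilon>\<close> for large \<open>x\<close>. This gives
  \<open>g \<in> L\<close> (shifts of \<open>q\<^sub>1\<close> are densities of the same kind), and since \<open>g \<otimes> g\<close> is the analogous
  integral of the density \<open>q\<^sub>1 \<otimes> q\<^sub>1\<close> against \<open>\<rho>\<^sub>2 * \<rho>\<^sub>2\<close>, whose windows are asymptotically
  twice those of \<open>\<rho>\<^sub>2\<close>, also \<open>g \<otimes> g \<sim> 2 g\<close>.\<close>

section \<open>Continuous functions of compact support\<close>

lemma continuous_vanishing_outside_bounded:
  fixes r :: "real \<Rightarrow> real"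
  assumes "continuous_on UNIV r" and "\<forall>v. \<bar>v\<bar> > B \<longrightarrow> r v = 0"
  shows "\<exists>M. \<forall>v. \<bar>r v\<bar> \<le> M"
proof -
  have "compact (r ` cball 0 B)"
    by (rule compact_continuous_image) (auto intro: continuous_on_subset[OF assms(1)])
  then obtain M where M: "\<forall>y\<in>r ` cball 0 B. norm y \<le> M"
    using compact_imp_bounded bounded_iff by metis
  have "\<bar>r v\<bar> \<le> max M 0" for v
  proof (cases "\<bar>v\<bar> > B")
    case False
    then have "v \<in> cball 0 B" by (simp add: dist_real_def)
    then have "norm (r v) \<le> M" using M by blast
    then show ?thesis by simp
  qed (simp add: assms(2))
  then show ?thesis by blast
qed

lemma continuous_vanishing_outside_uniformly_continuous:
  fixes r :: "real \<Rightarrow> real"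
  assumes "continuous_on UNIV r" and "\<forall>v. \<bar>v\<bar> > B \<longrightarrow> r v = 0"
  shows "uniformly_continuous_on UNIV r"
  unfolding uniformly_continuous_on_def
proof (intro allI impI)
  fix e :: real assume e: "e > 0"
  have "uniformly_continuous_on (cball 0 (B + 1)) r"
    by (rule compact_uniformly_continuous) (auto intro: continuous_on_subset[OF assms(1)])
  then obtain d where d: "d > 0"
    "\<forall>x\<in>cball 0 (B + 1). \<forall>x'\<in>cball 0 (B + 1). dist x' x < d \<longrightarrow> dist (r x') (r x) < e"
    unfolding uniformly_continuous_on_def using e by metis
  show "\<exists>d>0. \<forall>x\<in>UNIV. \<forall>x'\<in>UNIV. dist x' x < d \<longrightarrow> dist (r x') (r x) < e"
  proof (intro exI[of _ "min d 1"] conjI ballI impI)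
    fix v w :: real assume vw: "dist w v < min d 1"
    show "dist (r w) (r v) < e"
    proof (cases "\<bar>v\<bar> \<le> B + 1 \<and> \<bar>w\<bar> \<le> B + 1")
      case True
      then show ?thesis using d vw by auto
    next
      case False
      \<comment> \<open>the two points are less than 1 apart, so both lie outside the support\<close>
      then have "\<bar>v\<bar> > B \<and> \<bar>w\<bar> > B" using vw by (auto simp: dist_real_def)
      then show ?thesis using assms(2) e by simp
    qed
  qed (use d in auto)
qed

lemma compact_support_bound:
  fixes r :: "real \<Rightarrow> real"
  assumes "compact K" and "\<forall>x. x \<notin> K \<longrightarrow> r x = 0"
  shows "\<exists>B. \<forall>v. \<bar>v\<bar> > B \<longrightarrow> r v = 0"
proof -
  obtain B where "\<forall>x\<in>K. norm x \<le> B" using compact_imp_bounded[OF assms(1)] bounded_iff by metis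
  then have "\<forall>v. \<bar>v\<bar> > B \<longrightarrow> r v = 0" using assms(2) by force
  then show ?thesis ..
qed

lemma integrable_continuous_vanishing_outside:
  fixes r :: "real \<Rightarrow> real"
  assumes "continuous_on UNIV r" and "\<forall>v. \<bar>v\<bar> > B \<longrightarrow> r v = 0"
  shows "integrable lborel r"
proof -
  have "integrable lborel (\<lambda>x. indicator {-B..B} x *\<^sub>R r x)"
    by (rule borel_integrable_compact) (auto intro: continuous_on_subset[OF assms(1)])
  moreover have "(\<lambda>x. indicator {-B..B} x *\<^sub>R r x) = r"
    using assms(2) by (force simp: indicator_def)
  ultimately show ?thesis by simp
qed

lemma continuous_density_zero_on_null_open:
  fixes q :: "real \<Rightarrow> real"
  assumes "continuous_on UNIV q" and "\<forall>x. 0 \<le> q x" and [measurable]: "q \<in> borel_measurable borel"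
    and "open U" and null: "emeasure (density lborel (\<lambda>x. ennreal (q x))) U = 0" and "y \<in> U"
  shows "q y = 0"
proof (rule ccontr)
  assume "q y \<noteq> 0"
  then have qy: "q y > 0" using assms(2) by (simp add: order_less_le)
  obtain d1 where d1: "d1 > 0" "ball y d1 \<subseteq> U" using assms(4,6) open_contains_ball by blast
  obtain d2 where d2: "d2 > 0" "\<forall>x. dist x y < d2 \<longrightarrow> dist (q x) (q y) < q y / 2"
    using assms(1) qy unfolding continuous_on_iff by (metis UNIV_I half_gt_zero)
  define d where "d = min d1 d2"
  have d: "d > 0" using d1 d2 unfolding d_def by simp
  have "ennreal (q y / 2) * indicator {y - d<..<y} x \<le> ennreal (q x) * indicator U x" for x
  proof (cases "x \<in> {y - d<..<y}")
    case True
    then have "dist x y < d" by (auto simp: dist_real_def)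
    then have "\<bar>q x - q y\<bar> < q y / 2" and "x \<in> U"
      using d1(2) d2(2) unfolding d_def by (auto simp: dist_real_def dist_commute)
    then have "q x > q y / 2" and "x \<in> U" by linarith+
    then show ?thesis using True by (simp add: ennreal_leI)
  qed simp
  then have "(\<integral>\<^sup>+x. ennreal (q y / 2) * indicator {y - d<..<y} x \<partial>lborel)
      \<le> (\<integral>\<^sup>+x. ennreal (q x) * indicator U x \<partial>lborel)"
    by (rule nn_integral_mono)
  then have "ennreal (q y / 2) * ennreal d \<le> (\<integral>\<^sup>+x. ennreal (q x) * indicator U x \<partial>lborel)"
    using d by (simp add: nn_integral_cmult_indicator)
  also have "\<dots> = 0"
    using null emeasure_density[of "\<lambda>x. ennreal (q x)" lborel U] assms(4)
    by (simp add: borel_open)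
  finally show False using qy d by (simp add: ennreal_mult''[symmetric])
qed

section \<open>Convolution of a function with a finite measure\<close>

definition conv_measure :: "(real \<Rightarrow> real) \<Rightarrow> real measure \<Rightarrow> real \<Rightarrow> real" where
  "conv_measure r \<sigma> x = (\<integral>u. r (x - u) \<partial>\<sigma>)"

lemma conv_measure_measurable [measurable]:
  assumes [measurable]: "r \<in> borel_measurable borel"
    and "finite_measure \<sigma>" and [measurable_cong]: "sets \<sigma> = sets borel"
  shows "conv_measure r \<sigma> \<in> borel_measurable borel"
proof -
  interpret finite_measure \<sigma> by fact
  show ?thesis unfolding conv_measure_def
    by (rule borel_measurable_lebesgue_integral) measurable
qed

lemma integrable_reflected_bounded:
  fixes r :: "real \<Rightarrow> real"
  assumes [measurable]: "r \<in> borel_measurable borel"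
    and "finite_measure \<sigma>" and [measurable_cong]: "sets \<sigma> = sets borel"
    and "\<forall>v. \<bar>r v\<bar> \<le> M"
  shows "integrable \<sigma> (\<lambda>u. r (x - u))"
proof -
  interpret finite_measure \<sigma> by fact
  show ?thesis
    by (rule integrable_const_bound[where B=M]) (use assms(4) in auto)
qed

lemma conv_measure_nonneg:
  assumes "\<forall>v. 0 \<le> r v"
  shows "0 \<le> conv_measure r \<sigma> x"
  unfolding conv_measure_def using assms by (simp add: integral_nonneg)

lemma conv_measure_abs_le:
  fixes r :: "real \<Rightarrow> real"
  assumes "r \<in> borel_measurable borel"
    and "finite_measure \<sigma>" and "sets \<sigma> = sets borel" and M: "\<forall>v. \<bar>r v\<bar> \<le> M"
  shows "\<bar>conv_measure r \<sigma> x\<bar> \<le> M * measure \<sigma> (space \<sigma>)"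
proof -
  interpret finite_measure \<sigma> by fact
  have "\<bar>conv_measure r \<sigma> x\<bar> \<le> (\<integral>u. M \<partial>\<sigma>)" unfolding conv_measure_def
    using integral_abs_bound_integral[OF integrable_reflected_bounded[OF assms], of "\<lambda>_. M"] M
    by auto
  then show ?thesis by (simp add: mult.commute)
qed

lemma ennreal_conv_measure:
  fixes r :: "real \<Rightarrow> real"
  assumes "r \<in> borel_measurable borel"
    and "finite_measure \<sigma>" and "sets \<sigma> = sets borel"
    and "\<forall>v. \<bar>r v\<bar> \<le> M" and "\<forall>v. 0 \<le> r v"
  shows "ennreal (conv_measure r \<sigma> x) = (\<integral>\<^sup>+u. ennreal (r (x - u)) \<partial>\<sigma>)"
  unfolding conv_measure_def
  by (rule nn_integral_eq_integral[symmetric])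
    (use integrable_reflected_bounded[OF assms(1-4)] assms(5) in auto)

lemma conv_measure_convolution:
  fixes r :: "real \<Rightarrow> real"
  assumes [measurable]: "r \<in> borel_measurable borel"
    and M: "\<forall>v. \<bar>r v\<bar> \<le> M" and nn: "\<forall>v. 0 \<le> r v"
    and fs: "finite_measure \<sigma>" and ft: "finite_measure \<tau>"
    and ss: "sets \<sigma> = sets borel" and st: "sets \<tau> = sets borel"
  shows "conv_measure (conv_measure r \<tau>) \<sigma> x = conv_measure r (\<sigma> \<star> \<tau>) x"
proof -
  have [measurable]: "conv_measure r \<tau> \<in> borel_measurable borel"
    using ft st by measurable
  have bound: "\<forall>v. \<bar>conv_measure r \<tau> v\<bar> \<le> M * measure \<tau> (space \<tau>)"
    using conv_measure_abs_le[OF _ ft st M] by simp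
  have nonneg: "\<forall>v. 0 \<le> conv_measure r \<tau> v"
    using conv_measure_nonneg[OF nn] by blast
  have fc: "finite_measure (\<sigma> \<star> \<tau>)" by (rule convolution_finite[OF fs ft st ss])
  have "ennreal (conv_measure (conv_measure r \<tau>) \<sigma> x)
      = (\<integral>\<^sup>+u. ennreal (conv_measure r \<tau> (x - u)) \<partial>\<sigma>)"
    by (rule ennreal_conv_measure[OF _ fs ss bound nonneg]) simp
  also have "\<dots> = (\<integral>\<^sup>+u. \<integral>\<^sup>+w. ennreal (r (x - (u + w))) \<partial>\<tau> \<partial>\<sigma>)"
    by (simp add: ennreal_conv_measure[OF _ ft st M nn] diff_diff_eq)
  also have "\<dots> = (\<integral>\<^sup>+s. ennreal (r (x - s)) \<partial>(\<sigma> \<star> \<tau>))"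
    by (rule nn_integral_convolution[symmetric]) (use fs ft ss st in auto)
  also have "\<dots> = ennreal (conv_measure r (\<sigma> \<star> \<tau>) x)"
    by (rule ennreal_conv_measure[OF _ fc _ M nn, symmetric]) simp_all
  finally show ?thesis
    using conv_measure_nonneg[OF nonneg] conv_measure_nonneg[OF nn] by simp
qed

lemma density_convolution_eq_density_conv_measure:
  fixes r :: "real \<Rightarrow> real"
  assumes [measurable]: "r \<in> borel_measurable borel"
    and M: "\<forall>v. \<bar>r v\<bar> \<le> M" and nn: "\<forall>v. 0 \<le> r v"
    and fr: "finite_measure (density lborel (\<lambda>x. ennreal (r x)))"
    and fs: "finite_measure \<sigma>" and ss[measurable_cong]: "sets \<sigma> = sets borel"
  shows "density lborel (\<lambda>x. ennreal (r x)) \<star> \<sigma> = density lborel (\<lambda>x. ennreal (conv_measure r \<sigma> x))"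
proof (rule measure_eqI)
  interpret finite_measure \<sigma> by fact
  interpret pair_sigma_finite lborel \<sigma> ..
  have [measurable]: "conv_measure r \<sigma> \<in> borel_measurable borel"
    using fs ss by measurable
  fix A assume "A \<in> sets (density lborel (\<lambda>x. ennreal (r x)) \<star> \<sigma>)"
  then have [measurable]: "A \<in> sets borel" by simp
  have "emeasure (density lborel (\<lambda>x. ennreal (r x)) \<star> \<sigma>) A
      = (\<integral>\<^sup>+x. ennreal (r x) * \<integral>\<^sup>+y. indicator A (x + y) \<partial>\<sigma> \<partial>lborel)"
    by (simp add: convolution_emeasure'[OF _ fr fs ss] nn_integral_density)
  also have "\<dots> = (\<integral>\<^sup>+x. \<integral>\<^sup>+y. ennreal (r x) * indicator A (x + y) \<partial>\<sigma> \<partial>lborel)"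
    by (rule nn_integral_cong) (rule nn_integral_cmult[symmetric]; measurable)
  also have "\<dots> = (\<integral>\<^sup>+y. \<integral>\<^sup>+x. ennreal (r x) * indicator A (x + y) \<partial>lborel \<partial>\<sigma>)"
    by (rule Fubini'[symmetric]) measurable
  also have "\<dots> = (\<integral>\<^sup>+y. \<integral>\<^sup>+z. ennreal (r (z - y)) * indicator A z \<partial>lborel \<partial>\<sigma>)"
  proof (rule nn_integral_cong)
    fix y
    show "(\<integral>\<^sup>+x. ennreal (r x) * indicator A (x + y) \<partial>lborel)
        = (\<integral>\<^sup>+z. ennreal (r (z - y)) * indicator A z \<partial>lborel)"
      using nn_integral_real_affine[of "\<lambda>z. ennreal (r (z - y)) * indicator A z" 1 y]
      by (simp add: add.commute)
  qed
  also have "\<dots> = (\<integral>\<^sup>+z. \<integral>\<^sup>+y. ennreal (r (z - y)) * indicator A z \<partial>\<sigma> \<partial>lborel)"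
    by (rule Fubini') measurable
  also have "\<dots> = (\<integral>\<^sup>+z. ennreal (conv_measure r \<sigma> z) * indicator A z \<partial>lborel)"
    by (rule nn_integral_cong) (simp add: nn_integral_multc ennreal_conv_measure[OF _ fs ss M nn])
  also have "\<dots> = emeasure (density lborel (\<lambda>x. ennreal (conv_measure r \<sigma> x))) A"
    by (rule emeasure_density[symmetric]) auto
  finally show "emeasure (density lborel (\<lambda>x. ennreal (r x)) \<star> \<sigma>) A
      = emeasure (density lborel (\<lambda>x. ennreal (conv_measure r \<sigma> x))) A" .
qed simp

lemma uniformly_continuous_conv_measure:
  fixes r :: "real \<Rightarrow> real"
  assumes uc: "uniformly_continuous_on UNIV r" and M: "\<forall>v. \<bar>r v\<bar> \<le> M"
    and fs: "finite_measure \<sigma>" and ss: "sets \<sigma> = sets borel"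
  shows "uniformly_continuous_on UNIV (conv_measure r \<sigma>)"
  unfolding uniformly_continuous_on_def
proof (intro allI impI)
  interpret finite_measure \<sigma> by fact
  fix e :: real assume e: "e > 0"
  have rm: "r \<in> borel_measurable borel"
    using uc by (intro borel_measurable_continuous_onI uniformly_continuous_imp_continuous)
  define \<mu> where "\<mu> = measure \<sigma> (space \<sigma>)"
  have \<mu>0: "\<mu> \<ge> 0" unfolding \<mu>_def by simp
  obtain d where d: "d > 0" "\<forall>x\<in>UNIV. \<forall>x'\<in>UNIV. dist x' x < d \<longrightarrow> dist (r x') (r x) < e / (\<mu> + 1)"
    using uc e \<mu>0 unfolding uniformly_continuous_on_def
    by (metis add_nonneg_pos divide_pos_pos zero_less_one)
  show "\<exists>d>0. \<forall>x\<in>UNIV. \<forall>x'\<in>UNIV. dist x' x < d \<longrightarrow> dist (conv_measure r \<sigma> x') (conv_measure r \<sigma> x) < e"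
  proof (intro exI[of _ d] conjI ballI impI)
    fix x x' :: real assume "dist x' x < d"
    then have close: "\<bar>r (x' - u) - r (x - u)\<bar> \<le> e / (\<mu> + 1)" for u
      using d(2) by (auto simp: dist_real_def intro: less_imp_le)
    have i1: "integrable \<sigma> (\<lambda>u. r (x' - u))" and i2: "integrable \<sigma> (\<lambda>u. r (x - u))"
      by (rule integrable_reflected_bounded[OF rm fs ss M])+
    have "\<bar>conv_measure r \<sigma> x' - conv_measure r \<sigma> x\<bar> = \<bar>\<integral>u. r (x' - u) - r (x - u) \<partial>\<sigma>\<bar>"
      unfolding conv_measure_def using i1 i2 by simp
    also have "\<dots> \<le> (\<integral>u. e / (\<mu> + 1) \<partial>\<sigma>)"
      by (rule integral_abs_bound_integral) (use i1 i2 close in auto)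
    also have "\<dots> = e / (\<mu> + 1) * \<mu>" unfolding \<mu>_def by simp
    also have "\<dots> < e" using e \<mu>0 by (simp add: field_simps)
    finally show "dist (conv_measure r \<sigma> x') (conv_measure r \<sigma> x) < e"
      by (simp add: dist_real_def)
  qed (use d in auto)
qed

lemma conv_measure_density_vanishes_outside:
  fixes r p :: "real \<Rightarrow> real"
  assumes "\<forall>v. \<bar>v\<bar> > B \<longrightarrow> r v = 0" and "\<forall>v. \<bar>v\<bar> > B' \<longrightarrow> p v = 0"
    and "\<forall>v. 0 \<le> p v"
    and [measurable]: "p \<in> borel_measurable borel" "r \<in> borel_measurable borel"
  shows "\<forall>v. \<bar>v\<bar> > B + B' \<longrightarrow> conv_measure r (density lborel (\<lambda>x. ennreal (p x))) v = 0"
proof (intro allI impI)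
  fix v :: real assume v: "\<bar>v\<bar> > B + B'"
  have vanish: "p u * r (v - u) = 0" for u
  proof (cases "\<bar>u\<bar> > B'")
    case False
    then have "\<bar>v - u\<bar> > B" using v by linarith
    then show ?thesis using assms(1) by simp
  qed (simp add: assms(2))
  have "conv_measure r (density lborel (\<lambda>x. ennreal (p x))) v = (\<integral>u. p u *\<^sub>R r (v - u) \<partial>lborel)"
    unfolding conv_measure_def by (rule integral_density) (use assms(3) in auto)
  also have "\<dots> = 0"
    unfolding real_scaleR_def vanish by simp
  finally show "conv_measure r (density lborel (\<lambda>x. ennreal (p x))) v = 0" .
qed

lemma prob_space_convolution:
  assumes "prob_space M" and "prob_space N"
    and [measurable_cong]: "sets M = sets borel" "sets N = sets borel"
  shows "prob_space (M \<star> N)"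
proof -
  interpret M: prob_space M by fact
  interpret N: prob_space N by fact
  interpret pair_prob_space M N ..
  show ?thesis unfolding convolution_def by (rule prob_space_distr) measurable
qed

section \<open>Asymptotic equivalence and local long-tailedness\<close>

lemma asymp_eq_refl:
  assumes "\<forall>\<^sub>F x in at_top. f x \<noteq> 0"
  shows "asymp_eq f f"
  unfolding asymp_eq_def
  by (rule tendsto_eventually) (use assms in \<open>auto elim: eventually_mono\<close>)

lemma asymp_eq_sym:
  assumes "asymp_eq f g"
  shows "asymp_eq g f"
proof -
  have "((\<lambda>x. inverse (f x / g x)) \<longlongrightarrow> inverse 1) at_top"
    using assms unfolding asymp_eq_def by (intro tendsto_inverse) auto
  then show ?thesis unfolding asymp_eq_def by simp
qed

lemma asymp_eq_eventually_nonzero: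
  assumes "asymp_eq f g"
  shows "\<forall>\<^sub>F x in at_top. g x \<noteq> 0"
proof -
  have "\<forall>\<^sub>F x in at_top. f x / g x > 0"
    using assms unfolding asymp_eq_def by (rule order_tendstoD) simp
  then show ?thesis by (rule eventually_mono) auto
qed

lemma asymp_eq_trans [trans]:
  assumes "asymp_eq f g" and "asymp_eq g h"
  shows "asymp_eq f h"
proof -
  have "((\<lambda>x. f x / g x * (g x / h x)) \<longlongrightarrow> 1 * 1) at_top"
    using assms unfolding asymp_eq_def by (rule tendsto_mult)
  moreover have "\<forall>\<^sub>F x in at_top. f x / g x * (g x / h x) = f x / h x"
    using asymp_eq_eventually_nonzero[OF assms(1)] by (rule eventually_mono) simp
  ultimately show ?thesis unfolding asymp_eq_def by (simp add: Lim_transform_eventually)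
qed

lemma asymp_eq_cmult:
  assumes "asymp_eq f g" and "c \<noteq> 0"
  shows "asymp_eq (\<lambda>x. c * f x) (\<lambda>x. c * g x)"
  using assms unfolding asymp_eq_def by simp

lemma asymp_eq_shift:
  assumes "asymp_eq f g"
  shows "asymp_eq (\<lambda>x. f (x + a)) (\<lambda>x. g (x + a))"
proof -
  have "filterlim (\<lambda>x. x + a) at_top at_top"
    using filterlim_tendsto_add_at_top[OF tendsto_const filterlim_ident, of a] by (simp add: add.commute)
  then show ?thesis
    using assms unfolding asymp_eq_def by (rule filterlim_compose[rotated])
qed

lemma asymp_eq_eventually_rel_close:
  assumes "asymp_eq f g" and "\<forall>\<^sub>F x in at_top. 0 < g x" and "e > 0"
  shows "\<forall>\<^sub>F x in at_top. \<bar>f x - g x\<bar> \<le> e * g x"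
proof -
  have "\<forall>\<^sub>F x in at_top. \<bar>f x / g x - 1\<bar> < e"
    using tendstoD[OF assms(1)[unfolded asymp_eq_def] assms(3)] by (simp add: dist_real_def)
  with assms(2) show ?thesis
  proof eventually_elim
    case (elim x)
    then have "\<bar>f x - g x\<bar> = \<bar>f x / g x - 1\<bar> * g x"
      by (simp add: field_simps abs_mult_pos)
    also have "\<dots> \<le> e * g x" using elim by (intro mult_right_mono) auto
    finally show ?case .
  qed
qed

lemma asymp_eq_eventually_pos:
  assumes "asymp_eq f g" and "\<forall>\<^sub>F x in at_top. 0 < g x"
  shows "\<forall>\<^sub>F x in at_top. 0 < f x"
proof -
  have "\<forall>\<^sub>F x in at_top. \<bar>f x - g x\<bar> \<le> 1/2 * g x"
    by (rule asymp_eq_eventually_rel_close[OF assms]) simp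
  with assms(2) show ?thesis by eventually_elim arith
qed

lemma asymp_eq_if_rel_close:
  fixes f k :: "real \<Rightarrow> real"
  assumes "\<forall>\<epsilon>>0. \<exists>P. \<forall>\<^sub>F x in at_top. 0 < P x \<and> \<bar>f x - P x\<bar> \<le> \<epsilon> * P x \<and> \<bar>k x - P x\<bar> \<le> \<epsilon> * P x"
  shows "asymp_eq f k"
  unfolding asymp_eq_def
proof (rule tendstoI)
  fix e :: real assume e: "e > 0"
  define \<epsilon> where "\<epsilon> = min (1/2) (e/8)"
  have \<epsilon>: "\<epsilon> > 0" "\<epsilon> \<le> 1/2" "\<epsilon> \<le> e/8" using e unfolding \<epsilon>_def by auto
  obtain P where "\<forall>\<^sub>F x in at_top. 0 < P x \<and> \<bar>f x - P x\<bar> \<le> \<epsilon> * P x \<and> \<bar>k x - P x\<bar> \<le> \<epsilon> * P x"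
    using assms \<epsilon>(1) by blast
  then show "\<forall>\<^sub>F x in at_top. dist (f x / k x) 1 < e"
  proof eventually_elim
    case (elim x)
    then have p: "P x > 0" and a: "\<bar>f x - P x\<bar> \<le> \<epsilon> * P x" and b: "\<bar>k x - P x\<bar> \<le> \<epsilon> * P x"
      by auto
    have "\<epsilon> * P x \<le> (1/2) * P x" using \<epsilon> p by (intro mult_right_mono) auto
    then have k: "k x \<ge> P x / 2" using b by (simp add: abs_le_iff)
    have "\<bar>f x - k x\<bar> \<le> 2 * \<epsilon> * P x" using a b by (simp add: abs_le_iff)
    also have "\<dots> \<le> (e/4) * P x" using \<epsilon> p by (intro mult_right_mono) auto
    also have "\<dots> < e * (P x / 2)" using e p by simp
    also have "\<dots> \<le> e * k x" using e k by (intro mult_left_mono) auto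
    finally have "\<bar>f x - k x\<bar> < e * k x" .
    moreover have "k x > 0" using k p by linarith
    ultimately show ?case by (simp add: dist_real_def field_simps)
  qed
qed

definition locally_long_tailed :: "real measure \<Rightarrow> bool" where
  "locally_long_tailed \<sigma> \<longleftrightarrow> (\<forall>c>0. (\<forall>\<^sub>F x in at_top. 0 < measure \<sigma> {x<..x + c}) \<and>
     (\<forall>a. asymp_eq (\<lambda>x. measure \<sigma> {x + a<..x + a + c}) (\<lambda>x. measure \<sigma> {x<..x + c})))"

lemma class_S_loc_imp_locally_long_tailed:
  assumes "class_S_loc \<sigma>"
  shows "locally_long_tailed \<sigma>"
  using assms
  unfolding class_S_loc_def class_S_Delta_def class_L_Delta_def class_L_def locally_long_tailed_def
  by (simp add: add.assoc)

lemma class_S_loc_imp_locally_long_tailed_convolution: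
  assumes "class_S_loc \<sigma>"
  shows "locally_long_tailed (\<sigma> \<star> \<sigma>)"
  unfolding locally_long_tailed_def
proof (intro allI impI conjI)
  fix c a :: real assume c: "c > 0"
  define m where "m x = measure \<sigma> {x<..x + c}" for x
  define m2 where "m2 x = measure (\<sigma> \<star> \<sigma>) {x<..x + c}" for x
  have S: "asymp_eq m2 (\<lambda>x. 2 * m x)"
    using assms c unfolding class_S_loc_def class_S_Delta_def m_def m2_def by blast
  have "locally_long_tailed \<sigma>" using assms by (rule class_S_loc_imp_locally_long_tailed)
  then have pos: "\<forall>\<^sub>F x in at_top. 0 < m x" and shift: "asymp_eq (\<lambda>x. m (x + a)) m"
    using c unfolding locally_long_tailed_def m_def by (simp_all add: add.assoc)
  show "\<forall>\<^sub>F x in at_top. 0 < measure (\<sigma> \<star> \<sigma>) {x<..x + c}"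
    using asymp_eq_eventually_pos[OF S] pos unfolding m2_def by simp
  have "asymp_eq (\<lambda>x. m2 (x + a)) (\<lambda>x. 2 * m (x + a))"
    using asymp_eq_shift[OF S] by simp
  also have "asymp_eq \<dots> (\<lambda>x. 2 * m x)"
    using asymp_eq_cmult[OF shift] by simp
  also have "asymp_eq \<dots> m2"
    using asymp_eq_sym[OF S] .
  finally show "asymp_eq (\<lambda>x. measure (\<sigma> \<star> \<sigma>) {x + a<..x + a + c}) (\<lambda>x. measure (\<sigma> \<star> \<sigma>) {x<..x + c})"
    unfolding m2_def by (simp add: add.assoc)
qed

section \<open>Approximation by masses of short windows\<close>

definition cell :: "real \<Rightarrow> real \<Rightarrow> nat \<Rightarrow> real set" where
  "cell B h i = {-B + real i * h ..< -B + real i * h + h}"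

lemma mem_cell_iff:
  assumes "h > 0"
  shows "v \<in> cell B h i \<longleftrightarrow> \<lfloor>(v + B) / h\<rfloor> = int i"
proof -
  have "v \<in> cell B h i \<longleftrightarrow> real i \<le> (v + B) / h \<and> (v + B) / h < real i + 1"
    using assms by (auto simp: cell_def pos_le_divide_eq pos_divide_less_eq algebra_simps)
  also have "\<dots> \<longleftrightarrow> \<lfloor>(v + B) / h\<rfloor> = int i"
    by (simp add: floor_eq_iff)
  finally show ?thesis .
qed

lemma step_function_approx:
  fixes r :: "real \<Rightarrow> real"
  assumes h: "h > 0" and supp: "\<forall>v. \<bar>v\<bar> > B \<longrightarrow> r v = 0"
    and uc: "\<forall>v w. \<bar>v - w\<bar> < h \<longrightarrow> \<bar>r v - r w\<bar> \<le> e"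
    and NB: "B < -B + real N * h"
  shows "\<bar>r v - (\<Sum>i<N. r (-B + real i * h) * indicator (cell B h i) v)\<bar>
      \<le> e * (\<Sum>i<N. indicator (cell B h i) v)"
proof -
  define m where "m = \<lfloor>(v + B) / h\<rfloor>"
  have ind: "indicator (cell B h i) v = (if int i = m then 1 else (0::real))" for i
    using mem_cell_iff[OF h] unfolding m_def by (simp add: indicator_def)
  show ?thesis
  proof (cases "m < 0")
    case True
    then have "v < -B" using h unfolding m_def by (simp add: floor_less_iff divide_less_0_iff)
    then have "r v = 0" using supp by simp
    moreover have "int i \<noteq> m" for i using True by auto
    ultimately show ?thesis by (simp add: ind)
  next
    case False
    define k where "k = nat m"
    have ik: "(int i = m) = (i = k)" for i using False unfolding k_def by auto
    have step: "(\<Sum>i<N. r (-B + real i * h) * indicator (cell B h i) v)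
        = (if k < N then r (-B + real k * h) else 0)"
      by (simp only: ind ik) (simp add: if_distrib cong: if_cong)
    have count: "(\<Sum>i<N. indicator (cell B h i) v) = (if k < N then 1 else (0::real))"
      by (simp only: ind ik) simp
    have "v \<in> cell B h k"
      using mem_cell_iff[OF h, of v B k] False unfolding m_def k_def by simp
    then have v_ge: "-B + real k * h \<le> v" and v_close: "\<bar>v - (-B + real k * h)\<bar> < h"
      by (auto simp: cell_def)
    show ?thesis
    proof (cases "k < N")
      case True
      then show ?thesis unfolding step count using uc v_close by simp
    next
      case False
      then have "real N * h \<le> real k * h" using h by simp
      then have "r v = 0" using supp NB v_ge by simp
      then show ?thesis unfolding step count using False by simp
    qed
  qed
qed

lemma integral_step_approx:
  fixes c :: "nat \<Rightarrow> real" and f :: "'a \<Rightarrow> real"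
  assumes f: "integrable M f"
    and C: "\<And>i. C i \<in> sets M" "\<And>i. emeasure M (C i) < \<infinity>"
    and pw: "\<forall>x\<in>space M. \<bar>f x - (\<Sum>i<N. c i * indicator (C i) x)\<bar> \<le> e * (\<Sum>i<N. indicator (C i) x)"
  shows "\<bar>integral\<^sup>L M f - (\<Sum>i<N. c i * measure M (C i))\<bar> \<le> e * (\<Sum>i<N. measure M (C i))"
proof -
  have ind: "integrable M (indicator (C i) :: 'a \<Rightarrow> real)" for i
    using C by (intro integrable_real_indicator) auto
  define F where "F x = (\<Sum>i<N. c i * indicator (C i) x)" for x
  define E where "E x = (\<Sum>i<N. indicator (C i) x :: real)" for x
  have iF: "integrable M F" unfolding F_def
    by (intro Bochner_Integration.integrable_sum integrable_mult_right ind)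
  have iE: "integrable M E" unfolding E_def
    by (intro Bochner_Integration.integrable_sum ind)
  have "integral\<^sup>L M F = (\<Sum>i<N. c i * measure M (C i))"
    unfolding F_def by (subst Bochner_Integration.integral_sum) (use ind C(1) in \<open>auto simp: sets.Int_space_eq2\<close>)
  then have "\<bar>integral\<^sup>L M f - (\<Sum>i<N. c i * measure M (C i))\<bar> = \<bar>\<integral>x. f x - F x \<partial>M\<bar>"
    using f iF by simp
  also have "\<dots> \<le> (\<integral>x. \<bar>f x - F x\<bar> \<partial>M)"
    using integral_norm_bound[of M "\<lambda>x. f x - F x"] by simp
  also have "\<dots> \<le> (\<integral>x. e * E x \<partial>M)"
    using pw unfolding F_def[symmetric] E_def[symmetric]
    by (intro integral_mono integrable_abs Bochner_Integration.integrable_diff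
        integrable_mult_right f iF iE) auto
  also have "\<dots> = e * (\<Sum>i<N. measure M (C i))"
    unfolding E_def integral_mult_right_zero
    by (subst Bochner_Integration.integral_sum) (use ind C(1) in \<open>auto simp: sets.Int_space_eq2\<close>)
  finally show ?thesis .
qed

lemma riemann_sum_cells:
  fixes r :: "real \<Rightarrow> real" and c :: "nat \<Rightarrow> real"
  assumes ri: "integrable lborel r" and h: "h > 0"
    and step: "\<forall>v. \<bar>r v - (\<Sum>i<N. c i * indicator (cell B h i) v)\<bar> \<le> e * (\<Sum>i<N. indicator (cell B h i) v)"
  shows "\<bar>integral\<^sup>L lborel r - h * (\<Sum>i<N. c i)\<bar> \<le> e * real N * h"
proof -
  have cell_length: "measure lborel (cell B h i) = h" for i
    using h by (simp add: cell_def)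
  have "\<bar>integral\<^sup>L lborel r - (\<Sum>i<N. c i * measure lborel (cell B h i))\<bar>
      \<le> e * (\<Sum>i<N. measure lborel (cell B h i))"
    by (rule integral_step_approx[OF ri]) (use step h in \<open>auto simp: cell_def\<close>)
  moreover have "(\<Sum>i<N. c i * measure lborel (cell B h i)) = h * (\<Sum>i<N. c i)"
    by (simp add: cell_length sum_distrib_left mult.commute)
  moreover have "(\<Sum>i<N. measure lborel (cell B h i)) = real N * h"
    by (simp add: cell_length)
  ultimately show ?thesis by (simp only: mult.assoc)
qed

lemma window_sum_estimate:
  fixes c m :: "nat \<Rightarrow> real" and g h \<mu> e M :: real
  assumes h: "h > 0" and \<mu>: "\<mu> \<ge> 0" and e: "e \<ge> 0"
    and approx: "\<bar>g - (\<Sum>i<N. c i * m i)\<bar> \<le> e * (\<Sum>i<N. m i)"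
    and close: "\<forall>i<N. \<bar>m i - \<mu>\<bar> \<le> e * \<mu>"
    and bound: "\<forall>i. \<bar>c i\<bar> \<le> M"
    and riemann: "\<bar>1 - h * (\<Sum>i<N. c i)\<bar> \<le> e * real N * h"
  shows "\<bar>h * g - \<mu>\<bar> \<le> e * \<mu> * (real N * h * (2 + e + M))"
proof -
  have "(\<Sum>i<N. m i) \<le> (\<Sum>i<N. (1 + e) * \<mu>)"
    using close by (intro sum_mono) (auto simp: algebra_simps abs_le_iff)
  then have mass: "e * (\<Sum>i<N. m i) \<le> e * (real N * (1 + e) * \<mu>)"
    using e by (intro mult_left_mono) auto
  have "\<bar>(\<Sum>i<N. c i * m i) - (\<Sum>i<N. c i) * \<mu>\<bar> = \<bar>\<Sum>i<N. c i * (m i - \<mu>)\<bar>"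
    by (simp add: sum_distrib_right right_diff_distrib sum_subtractf)
  also have "\<dots> \<le> (\<Sum>i<N. \<bar>c i\<bar> * \<bar>m i - \<mu>\<bar>)"
    unfolding abs_mult[symmetric] by (rule sum_abs)
  also have "\<dots> \<le> (\<Sum>i<N. M * (e * \<mu>))"
    using close bound by (intro sum_mono mult_mono) auto
  finally have weights: "\<bar>(\<Sum>i<N. c i * m i) - (\<Sum>i<N. c i) * \<mu>\<bar> \<le> real N * M * e * \<mu>"
    by simp
  have g: "\<bar>g - (\<Sum>i<N. c i) * \<mu>\<bar> \<le> e * (real N * (1 + e) * \<mu>) + real N * M * e * \<mu>"
    using approx mass weights by linarith
  have "h * g - \<mu> = h * (g - (\<Sum>i<N. c i) * \<mu>) - (1 - h * (\<Sum>i<N. c i)) * \<mu>"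
    by (simp add: algebra_simps)
  then have "\<bar>h * g - \<mu>\<bar> \<le> \<bar>h * (g - (\<Sum>i<N. c i) * \<mu>)\<bar> + \<bar>(1 - h * (\<Sum>i<N. c i)) * \<mu>\<bar>"
    by (simp only: abs_triangle_ineq4)
  also have "\<dots> = h * \<bar>g - (\<Sum>i<N. c i) * \<mu>\<bar> + \<bar>1 - h * (\<Sum>i<N. c i)\<bar> * \<mu>"
    using h \<mu> by (simp add: abs_mult)
  also have "\<dots> \<le> h * (e * (real N * (1 + e) * \<mu>) + real N * M * e * \<mu>) + e * real N * h * \<mu>"
    using g riemann h \<mu> by (intro add_mono mult_left_mono mult_right_mono) auto
  also have "\<dots> = e * \<mu> * (real N * h * (2 + e + M))"
    by (simp add: algebra_simps)
  finally show ?thesis .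
qed

lemma conv_measure_window_estimate:
  fixes r :: "real \<Rightarrow> real" and \<sigma> :: "real measure"
  assumes fs: "finite_measure \<sigma>" and ss: "sets \<sigma> = sets borel" and llt: "locally_long_tailed \<sigma>"
    and [measurable]: "r \<in> borel_measurable borel" and ri: "integrable lborel r"
    and M: "\<forall>v. \<bar>r v\<bar> \<le> M" and supp: "\<forall>v. \<bar>v\<bar> > B \<longrightarrow> r v = 0"
    and int1: "integral\<^sup>L lborel r = 1"
    and h: "h > 0" and e: "e > 0" and uc: "\<forall>v w. \<bar>v - w\<bar> < h \<longrightarrow> \<bar>r v - r w\<bar> \<le> e"
    and NB: "B < -B + real N * h"
  shows "\<forall>\<^sub>F x in at_top. \<bar>h * conv_measure r \<sigma> x - measure \<sigma> {x<..x + h}\<bar>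
           \<le> e * measure \<sigma> {x<..x + h} * (real N * h * (2 + e + M))"
proof -
  interpret finite_measure \<sigma> by fact
  define c where "c i = r (-B + real i * h)" for i
  define a where "a i = B - real i * h - h" for i
  define m where "m x = measure \<sigma> {x<..x + h}" for x
  define mcell where "mcell x i = measure \<sigma> {x + a i<..x + a i + h}" for x i
  have step: "\<forall>v. \<bar>r v - (\<Sum>i<N. c i * indicator (cell B h i) v)\<bar> \<le> e * (\<Sum>i<N. indicator (cell B h i) v)"
    unfolding c_def using step_function_approx[OF h supp uc NB] by blast
  have riemann: "\<bar>1 - h * (\<Sum>i<N. c i)\<bar> \<le> e * real N * h"
    using riemann_sum_cells[OF ri h step] int1 by simp
  have approx: "\<bar>conv_measure r \<sigma> x - (\<Sum>i<N. c i * mcell x i)\<bar> \<le> e * (\<Sum>i<N. mcell x i)" for x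
  proof -
    have reflect: "indicator (cell B h i) (x - u) = (indicator {x + a i<..x + a i + h} u :: real)" for i u
      unfolding cell_def a_def indicator_def by auto
    have "\<forall>u\<in>space \<sigma>. \<bar>r (x - u) - (\<Sum>i<N. c i * indicator {x + a i<..x + a i + h} u)\<bar>
        \<le> e * (\<Sum>i<N. indicator {x + a i<..x + a i + h} u)"
      using step unfolding reflect[symmetric] by blast
    then show ?thesis
      unfolding conv_measure_def mcell_def
      by (rule integral_step_approx[OF integrable_reflected_bounded[OF _ fs ss M], rotated -1])
        (simp_all add: ss emeasure_finite less_top[symmetric])
  qed
  have pos: "\<forall>\<^sub>F x in at_top. 0 < m x"
    using llt h unfolding locally_long_tailed_def m_def by blast
  have "\<forall>\<^sub>F x in at_top. \<bar>mcell x i - m x\<bar> \<le> e * m x" for i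
  proof (rule asymp_eq_eventually_rel_close[OF _ pos e])
    show "asymp_eq (\<lambda>x. mcell x i) m"
      using llt h unfolding locally_long_tailed_def m_def mcell_def by blast
  qed
  then have close: "\<forall>\<^sub>F x in at_top. \<forall>i\<in>{..<N}. \<bar>mcell x i - m x\<bar> \<le> e * m x"
    by (simp add: eventually_ball_finite_distrib)
  from close pos show ?thesis
    unfolding m_def[symmetric]
  proof eventually_elim
    case (elim x)
    show ?case
    proof (rule window_sum_estimate[OF h _ _ approx _ _ riemann])
      show "0 \<le> m x" unfolding m_def by simp
      show "\<forall>i<N. \<bar>mcell x i - m x\<bar> \<le> e * m x" using elim(1) by simp
      show "\<forall>i. \<bar>c i\<bar> \<le> M" using M by (simp add: c_def)
    qed (use e in simp)
  qed
qed

lemma cell_count_exists: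
  assumes "B \<ge> 0" and "0 < h" and "h \<le> 1"
  shows "\<exists>N. B < -B + real N * h \<and> real N * h \<le> 2 * B + 2"
proof -
  define N where "N = nat \<lceil>2 * B / h\<rceil> + 1"
  have "real N = real_of_int \<lceil>2 * B / h\<rceil> + 1"
    unfolding N_def using assms by simp
  then have "2 * B / h + 1 \<le> real N" and "real N < 2 * B / h + 2"
    by linarith+
  then have "2 * B + h \<le> real N * h" and "real N * h < 2 * B + 2 * h"
    using assms(2) by (simp_all add: field_simps)
  then show ?thesis using assms by (intro exI[of _ N]) linarith
qed

definition window_approx :: "(real \<Rightarrow> real) \<Rightarrow> real measure \<Rightarrow> bool" where
  "window_approx f \<sigma> \<longleftrightarrow> (\<forall>\<epsilon>>0. \<exists>h0>0. \<forall>h. 0 < h \<and> h \<le> h0 \<longrightarrow>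
     (\<forall>\<^sub>F x in at_top. \<bar>h * f x - measure \<sigma> {x<..x + h}\<bar> \<le> \<epsilon> * measure \<sigma> {x<..x + h}))"

lemma window_approx_conv_measure:
  fixes r :: "real \<Rightarrow> real" and \<sigma> :: "real measure"
  assumes fs: "finite_measure \<sigma>" and ss: "sets \<sigma> = sets borel" and llt: "locally_long_tailed \<sigma>"
    and rc: "continuous_on UNIV r" and supp: "\<forall>v. \<bar>v\<bar> > B \<longrightarrow> r v = 0"
    and int1: "integral\<^sup>L lborel r = 1"
  shows "window_approx (conv_measure r \<sigma>) \<sigma>"
  unfolding window_approx_def
proof (intro allI impI)
  fix \<epsilon> :: real assume \<epsilon>: "\<epsilon> > 0"
  define B' where "B' = max B 0"
  have B': "B' \<ge> 0" and supp': "\<forall>v. \<bar>v\<bar> > B' \<longrightarrow> r v = 0"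
    using supp unfolding B'_def by auto
  obtain M where M: "\<forall>v. \<bar>r v\<bar> \<le> M"
    using continuous_vanishing_outside_bounded[OF rc supp] by blast
  have M0: "M \<ge> 0" using M[rule_format, of 0] by linarith
  have rm: "r \<in> borel_measurable borel" by (rule borel_measurable_continuous_onI[OF rc])
  have ri: "integrable lborel r" by (rule integrable_continuous_vanishing_outside[OF rc supp])
  define C where "C = (2 * B' + 2) * (3 + M)"
  have C: "C > 0" unfolding C_def using B' M0 by simp
  define e where "e = min 1 (\<epsilon> / C)"
  have e: "e > 0" "e \<le> 1" "e * C \<le> \<epsilon>"
    using \<epsilon> C unfolding e_def by (auto simp: min_def field_simps)
  obtain d where d: "d > 0" "\<forall>v w. dist w v < d \<longrightarrow> dist (r w) (r v) < e"
    using continuous_vanishing_outside_uniformly_continuous[OF rc supp] e(1)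
    unfolding uniformly_continuous_on_def by blast
  show "\<exists>h0>0. \<forall>h. 0 < h \<and> h \<le> h0 \<longrightarrow>
     (\<forall>\<^sub>F x in at_top. \<bar>h * conv_measure r \<sigma> x - measure \<sigma> {x<..x + h}\<bar> \<le> \<epsilon> * measure \<sigma> {x<..x + h})"
  proof (intro exI[of _ "min (d / 2) 1"] conjI allI impI)
    fix h assume h: "0 < h \<and> h \<le> min (d / 2) 1"
    then have uc: "\<forall>v w. \<bar>v - w\<bar> < h \<longrightarrow> \<bar>r v - r w\<bar> \<le> e"
      using d(2) by (auto simp: dist_real_def intro!: less_imp_le)
    obtain N where NB: "B' < -B' + real N * h" and Nh: "real N * h \<le> 2 * B' + 2"
      using cell_count_exists[OF B'] h by auto
    define K where "K = real N * h * (2 + e + M)"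
    have "e * K \<le> e * C"
      unfolding K_def C_def using e Nh B' M0 h by (intro mult_left_mono mult_mono) auto
    then have eK: "e * K \<le> \<epsilon>" using e(3) by linarith
    have "e * \<mu> * K \<le> \<epsilon> * \<mu>" if "\<mu> \<ge> 0" for \<mu>
    proof -
      have "e * \<mu> * K = (e * K) * \<mu>" by (simp only: ac_simps)
      also have "\<dots> \<le> \<epsilon> * \<mu>" using eK that by (rule mult_right_mono)
      finally show ?thesis .
    qed
    moreover have "\<forall>\<^sub>F x in at_top. \<bar>h * conv_measure r \<sigma> x - measure \<sigma> {x<..x + h}\<bar>
        \<le> e * measure \<sigma> {x<..x + h} * K"
      unfolding K_def using h
      by (intro conv_measure_window_estimate[OF fs ss llt rm ri M supp' int1 _ e(1) uc NB]) simp
    ultimately show "\<forall>\<^sub>F x in at_top. \<bar>h * conv_measure r \<sigma> x - measure \<sigma> {x<..x + h}\<bar>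
        \<le> \<epsilon> * measure \<sigma> {x<..x + h}"
      by (elim eventually_mono) (meson measure_nonneg order_trans)
  qed (use d in simp)
qed

lemma eventually_pos_if_window_approx:
  assumes "window_approx f \<sigma>" and "locally_long_tailed \<sigma>"
  shows "\<forall>\<^sub>F x in at_top. 0 < f x"
proof -
  obtain h where h: "h > 0" and "\<forall>h'. 0 < h' \<and> h' \<le> h \<longrightarrow>
      (\<forall>\<^sub>F x in at_top. \<bar>h' * f x - measure \<sigma> {x<..x + h'}\<bar> \<le> 1/2 * measure \<sigma> {x<..x + h'})"
    using assms(1) unfolding window_approx_def by (meson half_gt_zero zero_less_one)
  then have close: "\<forall>\<^sub>F x in at_top. \<bar>h * f x - measure \<sigma> {x<..x + h}\<bar> \<le> 1/2 * measure \<sigma> {x<..x + h}"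
    by blast
  have "\<forall>\<^sub>F x in at_top. 0 < measure \<sigma> {x<..x + h}"
    using assms(2) h unfolding locally_long_tailed_def by blast
  with close show ?thesis
  proof eventually_elim
    case (elim x)
    then have "0 < h * f x" by arith
    then show ?case using h by (simp add: zero_less_mult_iff)
  qed
qed

lemma rel_close_of_window_bounds:
  fixes y w P h e \<epsilon> :: real
  assumes h: "h > 0" and P: "P > 0" and e: "0 \<le> e" "e \<le> 1" "3 * e \<le> \<epsilon>"
    and wP: "\<bar>w - P\<bar> \<le> e * P" and yw: "\<bar>h * y - w\<bar> \<le> e * w"
  shows "\<bar>y - P / h\<bar> \<le> \<epsilon> * (P / h)"
proof -
  have "e * P \<le> 1 * P" using e(2) P by (intro mult_right_mono) auto
  then have "e * w \<le> e * (2 * P)" using wP e(1) by (intro mult_left_mono) auto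
  then have "\<bar>h * y - P\<bar> \<le> (3 * e) * P" using wP yw by linarith
  also have "\<dots> \<le> \<epsilon> * P" using e(3) P by (intro mult_right_mono) auto
  finally have "\<bar>h * y - P\<bar> / h \<le> \<epsilon> * P / h" using h by (intro divide_right_mono) auto
  moreover have "y - P / h = (h * y - P) / h" using h by (simp add: field_simps)
  ultimately show ?thesis using h by simp
qed

lemma asymp_eq_if_window_approx:
  fixes f k :: "real \<Rightarrow> real" and \<sigma> \<tau> :: "real measure"
  assumes f: "window_approx f \<tau>" and k: "window_approx k \<sigma>"
    and llt: "locally_long_tailed \<sigma>" and \<alpha>: "\<alpha> > 0"
    and ratio: "\<forall>c>0. asymp_eq (\<lambda>x. measure \<tau> {x<..x + c}) (\<lambda>x. \<alpha> * measure \<sigma> {x<..x + c})"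
  shows "asymp_eq f (\<lambda>x. \<alpha> * k x)"
proof (rule asymp_eq_if_rel_close, intro allI impI)
  fix \<epsilon> :: real assume \<epsilon>: "\<epsilon> > 0"
  define e where "e = min 1 (\<epsilon> / 3)"
  have e: "e > 0" "e \<le> 1" "3 * e \<le> \<epsilon>" using \<epsilon> unfolding e_def by auto
  obtain h1 where h1: "h1 > 0" "\<forall>h. 0 < h \<and> h \<le> h1 \<longrightarrow>
      (\<forall>\<^sub>F x in at_top. \<bar>h * f x - measure \<tau> {x<..x + h}\<bar> \<le> e * measure \<tau> {x<..x + h})"
    using f e(1) unfolding window_approx_def by blast
  obtain h2 where h2: "h2 > 0" "\<forall>h. 0 < h \<and> h \<le> h2 \<longrightarrow>
      (\<forall>\<^sub>F x in at_top. \<bar>h * k x - measure \<sigma> {x<..x + h}\<bar> \<le> e * measure \<sigma> {x<..x + h})"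
    using k e(1) unfolding window_approx_def by blast
  define h where "h = min h1 h2"
  have h: "h > 0" using h1 h2 unfolding h_def by simp
  define m where "m x = measure \<sigma> {x<..x + h}" for x
  define m' where "m' x = measure \<tau> {x<..x + h}" for x
  have "\<forall>\<^sub>F x in at_top. 0 < m x"
    using llt h unfolding locally_long_tailed_def m_def by blast
  then have pos: "\<forall>\<^sub>F x in at_top. 0 < \<alpha> * m x"
    by (rule eventually_mono) (simp add: \<alpha>)
  have "asymp_eq m' (\<lambda>x. \<alpha> * m x)"
    using ratio h unfolding m_def m'_def by blast
  then have ratio_close: "\<forall>\<^sub>F x in at_top. \<bar>m' x - \<alpha> * m x\<bar> \<le> e * (\<alpha> * m x)"
    by (rule asymp_eq_eventually_rel_close[OF _ pos e(1)])
  have f_close: "\<forall>\<^sub>F x in at_top. \<bar>h * f x - m' x\<bar> \<le> e * m' x"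
    using h1(2) h unfolding h_def m'_def by auto
  have k_close: "\<forall>\<^sub>F x in at_top. \<bar>h * k x - m x\<bar> \<le> e * m x"
    using h2(2) h unfolding h_def m_def by auto
  show "\<exists>P. \<forall>\<^sub>F x in at_top. 0 < P x \<and> \<bar>f x - P x\<bar> \<le> \<epsilon> * P x \<and> \<bar>\<alpha> * k x - P x\<bar> \<le> \<epsilon> * P x"
  proof (intro exI[of _ "\<lambda>x. \<alpha> * m x / h"])
    from pos ratio_close f_close k_close
    show "\<forall>\<^sub>F x in at_top. 0 < \<alpha> * m x / h \<and> \<bar>f x - \<alpha> * m x / h\<bar> \<le> \<epsilon> * (\<alpha> * m x / h)
        \<and> \<bar>\<alpha> * k x - \<alpha> * m x / h\<bar> \<le> \<epsilon> * (\<alpha> * m x / h)"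
    proof eventually_elim
      case (elim x)
      have "h * (\<alpha> * k x) - \<alpha> * m x = \<alpha> * (h * k x - m x)" by (simp add: algebra_simps)
      then have "\<bar>h * (\<alpha> * k x) - \<alpha> * m x\<bar> = \<alpha> * \<bar>h * k x - m x\<bar>" using \<alpha> by (simp add: abs_mult)
      also have "\<dots> \<le> e * (\<alpha> * m x)" using elim(4) \<alpha> by (simp add: mult_left_mono)
      finally have "\<bar>h * (\<alpha> * k x) - \<alpha> * m x\<bar> \<le> e * (\<alpha> * m x)" .
      then have "\<bar>\<alpha> * k x - \<alpha> * m x / h\<bar> \<le> \<epsilon> * (\<alpha> * m x / h)"
        using elim(1) e by (intro rel_close_of_window_bounds[OF h elim(1)]) auto
      moreover have "\<bar>f x - \<alpha> * m x / h\<bar> \<le> \<epsilon> * (\<alpha> * m x / h)"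
        using e by (intro rel_close_of_window_bounds[OF h elim(1) _ _ _ elim(2,3)]) auto
      ultimately show ?case using elim(1) h by simp
    qed
  qed
qed

section \<open>Subexponential densities\<close>

lemma density_function_integral_eq_1:
  assumes "density_function q"
  shows "integral\<^sup>L lborel q = 1"
  using assms integral_eq_nn_integral[of q lborel] unfolding density_function_def by simp

lemma prob_space_density_function:
  assumes "density_function q"
  shows "prob_space (density lborel (\<lambda>x. ennreal (q x)))"
  using assms unfolding density_function_def
  by (intro prob_spaceI) (simp add: emeasure_density)

lemma density_function_conv_measure:
  assumes q: "density_function q" and M: "\<forall>v. \<bar>q v\<bar> \<le> M"
    and \<sigma>: "prob_space \<sigma>" "sets \<sigma> = sets borel"
  shows "density_function (conv_measure q \<sigma>)"
proof -
  have [measurable]: "q \<in> borel_measurable borel" and nonneg: "\<forall>v. 0 \<le> q v"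
    using q unfolding density_function_def by auto
  have fin: "finite_measure \<sigma>" using \<sigma>(1) by (rule prob_space.finite_measure)
  have [measurable]: "conv_measure q \<sigma> \<in> borel_measurable borel" using fin \<sigma>(2) by measurable
  have \<rho>: "prob_space (density lborel (\<lambda>x. ennreal (q x)))"
    using q by (rule prob_space_density_function)
  have "(\<integral>\<^sup>+x. ennreal (conv_measure q \<sigma> x) \<partial>lborel)
      = emeasure (density lborel (\<lambda>x. ennreal (conv_measure q \<sigma> x))) UNIV"
    by (simp add: emeasure_density)
  also have "\<dots> = emeasure (density lborel (\<lambda>x. ennreal (q x)) \<star> \<sigma>) UNIV"
    using \<rho> fin \<sigma>(2)
    by (simp add: density_convolution_eq_density_conv_measure[OF _ M nonneg] prob_space.finite_measure)
  also have "\<dots> = 1"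
    using prob_space.emeasure_space_1[OF prob_space_convolution[OF \<rho> \<sigma>(1) _ \<sigma>(2)]] by simp
  finally show ?thesis
    unfolding density_function_def using fin \<sigma>(2) conv_measure_nonneg[OF nonneg] by simp
qed

lemma conv_measure_class_L:
  fixes q :: "real \<Rightarrow> real" and \<sigma> :: "real measure"
  assumes qc: "continuous_on UNIV q" and supp: "\<forall>v. \<bar>v\<bar> > B \<longrightarrow> q v = 0"
    and nonneg: "\<forall>v. 0 \<le> q v" and int1: "integral\<^sup>L lborel q = 1"
    and fs: "finite_measure \<sigma>" and ss: "sets \<sigma> = sets borel" and llt: "locally_long_tailed \<sigma>"
  shows "class_L (conv_measure q \<sigma>)"
  unfolding class_L_def
proof (intro conjI allI)
  have [measurable]: "q \<in> borel_measurable borel" by (rule borel_measurable_continuous_onI[OF qc])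
  show "conv_measure q \<sigma> \<in> borel_measurable borel" using fs ss by measurable
  show "0 \<le> conv_measure q \<sigma> x" for x using nonneg by (rule conv_measure_nonneg)
  have window: "window_approx (conv_measure q \<sigma>) \<sigma>"
    by (rule window_approx_conv_measure[OF fs ss llt qc supp int1])
  then show "\<forall>\<^sub>F x in at_top. 0 < conv_measure q \<sigma> x"
    using llt by (rule eventually_pos_if_window_approx)
  fix a :: real
  define qa where "qa v = q (v + a)" for v
  have "continuous_on UNIV qa"
    unfolding qa_def by (rule continuous_on_compose2[OF qc]) (auto intro!: continuous_intros)
  moreover have "\<forall>v. \<bar>v\<bar> > B + \<bar>a\<bar> \<longrightarrow> qa v = 0"
    unfolding qa_def using supp by fastforce
  moreover have "integral\<^sup>L lborel qa = 1"
    using lborel_integral_real_affine[of 1 q a] int1 unfolding qa_def by (simp add: add.commute)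
  ultimately have "window_approx (conv_measure qa \<sigma>) \<sigma>"
    by (rule window_approx_conv_measure[OF fs ss llt])
  moreover have "asymp_eq (\<lambda>x. measure \<sigma> {x<..x + c}) (\<lambda>x. 1 * measure \<sigma> {x<..x + c})"
    if "c > 0" for c
  proof -
    have "\<forall>\<^sub>F x in at_top. 0 < measure \<sigma> {x<..x + c}"
      using llt that unfolding locally_long_tailed_def by blast
    then have "\<forall>\<^sub>F x in at_top. measure \<sigma> {x<..x + c} \<noteq> 0" by (rule eventually_mono) simp
    then show ?thesis by (simp add: asymp_eq_refl)
  qed
  ultimately have "asymp_eq (conv_measure qa \<sigma>) (\<lambda>x. 1 * conv_measure q \<sigma> x)"
    using window llt by (intro asymp_eq_if_window_approx) auto
  moreover have "conv_measure qa \<sigma> = (\<lambda>x. conv_measure q \<sigma> (x + a))"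
    unfolding conv_measure_def qa_def by (rule ext) (simp add: algebra_simps)
  ultimately show "asymp_eq (\<lambda>x. conv_measure q \<sigma> (x + a)) (conv_measure q \<sigma>)"
    by simp
qed

lemma fconv_conv_measure_self:
  fixes q :: "real \<Rightarrow> real" and \<sigma> :: "real measure"
  assumes qm[measurable]: "q \<in> borel_measurable borel"
    and M: "\<forall>v. \<bar>q v\<bar> \<le> M" and nonneg: "\<forall>v. 0 \<le> q v"
    and f\<rho>: "finite_measure (density lborel (\<lambda>x. ennreal (q x)))"
    and fs: "finite_measure \<sigma>" and ss: "sets \<sigma> = sets borel"
  shows "fconv (conv_measure q \<sigma>) (conv_measure q \<sigma>) x
    = conv_measure (conv_measure q (density lborel (\<lambda>x. ennreal (q x)))) (\<sigma> \<star> \<sigma>) x"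
proof -
  define \<rho> where "\<rho> = density lborel (\<lambda>x. ennreal (q x))"
  define g where "g = conv_measure q \<sigma>"
  have s\<rho>: "sets \<rho> = sets borel" unfolding \<rho>_def by simp
  have f\<rho>': "finite_measure \<rho>" unfolding \<rho>_def by fact
  have fss: "finite_measure (\<sigma> \<star> \<sigma>)" by (rule convolution_finite[OF fs fs ss ss])
  have f\<rho>s: "finite_measure (\<rho> \<star> \<sigma>)" by (rule convolution_finite[OF f\<rho>' fs ss s\<rho>])
  have [measurable]: "g \<in> borel_measurable borel" unfolding g_def using fs ss by measurable
  have "fconv g g x = (\<integral>u. g u *\<^sub>R g (x - u) \<partial>lborel)"
    unfolding fconv_def by (simp add: mult.commute)
  also have "\<dots> = (\<integral>u. g (x - u) \<partial>density lborel (\<lambda>x. ennreal (g x)))"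
  proof (rule integral_density[symmetric])
    show "(\<lambda>u. g (x - u)) \<in> borel_measurable lborel" and "g \<in> borel_measurable lborel"
      by measurable
    show "AE x in lborel. 0 \<le> g x" unfolding g_def using conv_measure_nonneg[OF nonneg] by simp
  qed
  also have "density lborel (\<lambda>x. ennreal (g x)) = (\<rho> \<star> \<sigma>)"
    unfolding g_def \<rho>_def
    by (rule density_convolution_eq_density_conv_measure[OF qm M nonneg f\<rho> fs ss, symmetric])
  also have "(\<integral>u. g (x - u) \<partial>(\<rho> \<star> \<sigma>)) = conv_measure q ((\<rho> \<star> \<sigma>) \<star> \<sigma>) x"
    unfolding g_def conv_measure_def[of _ "\<rho> \<star> \<sigma>", symmetric]
    by (rule conv_measure_convolution[OF qm M nonneg f\<rho>s fs _ ss]) simp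
  also have "((\<rho> \<star> \<sigma>) \<star> \<sigma>) = ((\<sigma> \<star> \<sigma>) \<star> \<rho>)"
    using convolution_associative[OF fs fs f\<rho>' ss ss s\<rho>]
      convolution_commutative[OF f\<rho>' fss _ s\<rho>] by simp
  also have "conv_measure q ((\<sigma> \<star> \<sigma>) \<star> \<rho>) x = conv_measure (conv_measure q \<rho>) (\<sigma> \<star> \<sigma>) x"
    by (rule conv_measure_convolution[OF qm M nonneg fss f\<rho>' _ s\<rho>, symmetric]) simp
  finally show ?thesis unfolding g_def \<rho>_def .
qed

lemma conv_measure_class_S_d:
  fixes q :: "real \<Rightarrow> real" and \<sigma> :: "real measure"
  assumes q: "density_function q" "continuous_on UNIV q" "\<forall>v. \<bar>v\<bar> > B \<longrightarrow> q v = 0"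
    and \<sigma>: "prob_space \<sigma>" "sets \<sigma> = sets borel" "class_S_loc \<sigma>"
  shows "class_S_d (conv_measure q \<sigma>)"
proof -
  have qm[measurable]: "q \<in> borel_measurable borel" and nonneg: "\<forall>v. 0 \<le> q v"
    using q(1) unfolding density_function_def by auto
  have int1: "integral\<^sup>L lborel q = 1" using q(1) by (rule density_function_integral_eq_1)
  obtain M where M: "\<forall>v. \<bar>q v\<bar> \<le> M" using continuous_vanishing_outside_bounded[OF q(2,3)] by blast
  have fs: "finite_measure \<sigma>" using \<sigma>(1) by (rule prob_space.finite_measure)
  have fss: "finite_measure (\<sigma> \<star> \<sigma>)" by (rule convolution_finite[OF fs fs \<sigma>(2) \<sigma>(2)])
  have llt: "locally_long_tailed \<sigma>" using \<sigma>(3) by (rule class_S_loc_imp_locally_long_tailed)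
  define \<rho> where "\<rho> = density lborel (\<lambda>x. ennreal (q x))"
  have \<rho>: "prob_space \<rho>" "sets \<rho> = sets borel"
    unfolding \<rho>_def using q(1) by (simp_all add: prob_space_density_function)
  \<comment> \<open>\<open>q2\<close> is the density of \<open>\<rho> \<star> \<rho>\<close>; it is again continuous with compact support\<close>
  define q2 where "q2 = conv_measure q \<rho>"
  have q2: "density_function q2" "continuous_on UNIV q2" "\<forall>v. \<bar>v\<bar> > B + B \<longrightarrow> q2 v = 0"
    unfolding q2_def
    using density_function_conv_measure[OF q(1) M \<rho>]
      uniformly_continuous_conv_measure[OF continuous_vanishing_outside_uniformly_continuous[OF q(2,3)]
        M prob_space.finite_measure[OF \<rho>(1)] \<rho>(2)]
      conv_measure_density_vanishes_outside[OF q(3) q(3) nonneg qm qm]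
    by (simp_all add: \<rho>_def uniformly_continuous_imp_continuous)
  have "fconv (conv_measure q \<sigma>) (conv_measure q \<sigma>) = conv_measure q2 (\<sigma> \<star> \<sigma>)"
    unfolding q2_def \<rho>_def
    using fconv_conv_measure_self[OF qm M nonneg _ fs \<sigma>(2)] \<rho>(1)
    by (simp add: fun_eq_iff \<rho>_def prob_space.finite_measure)
  moreover have "window_approx (conv_measure q2 (\<sigma> \<star> \<sigma>)) (\<sigma> \<star> \<sigma>)"
    using window_approx_conv_measure[OF fss _ class_S_loc_imp_locally_long_tailed_convolution[OF \<sigma>(3)]
        q2(2,3) density_function_integral_eq_1[OF q2(1)]]
    by simp
  moreover have "window_approx (conv_measure q \<sigma>) \<sigma>"
    by (rule window_approx_conv_measure[OF fs \<sigma>(2) llt q(2,3) int1])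
  moreover have "\<forall>c>0. asymp_eq (\<lambda>x. measure (\<sigma> \<star> \<sigma>) {x<..x + c}) (\<lambda>x. 2 * measure \<sigma> {x<..x + c})"
    using \<sigma>(3) unfolding class_S_loc_def class_S_Delta_def by blast
  ultimately have "asymp_eq (fconv (conv_measure q \<sigma>) (conv_measure q \<sigma>)) (\<lambda>x. 2 * conv_measure q \<sigma> x)"
    using llt by (simp add: asymp_eq_if_window_approx)
  moreover have "class_L (conv_measure q \<sigma>)"
    by (rule conv_measure_class_L[OF q(2,3) nonneg int1 fs \<sigma>(2) llt])
  moreover have "density_function (conv_measure q \<sigma>)"
    by (rule density_function_conv_measure[OF q(1) M \<sigma>(1,2)])
  ultimately show ?thesis unfolding class_S_d_def class_L_d_def by blast
qed

lemma set_integral_Icc_eq_conv_measure: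
  fixes q :: "real \<Rightarrow> real" and \<sigma> :: "real measure"
  assumes [measurable]: "q \<in> borel_measurable borel" and ss[measurable_cong]: "sets \<sigma> = sets borel"
    and null: "emeasure \<sigma> {..<0} = 0" and neg: "\<forall>y<0. q y = 0"
  shows "(\<integral>u\<in>{0..x}. q (x - u) \<partial>\<sigma>) = conv_measure q \<sigma> x"
proof -
  have "AE u in \<sigma>. u \<ge> 0"
    by (rule AE_I'[of "{..<0}"]) (use null ss in \<open>auto simp: null_sets_def\<close>)
  then have "AE u in \<sigma>. indicator {0..x} u *\<^sub>R q (x - u) = q (x - u)"
    by eventually_elim (use neg in \<open>auto simp: indicator_def\<close>)
  then have "(\<integral>u. indicator {0..x} u *\<^sub>R q (x - u) \<partial>\<sigma>) = (\<integral>u. q (x - u) \<partial>\<sigma>)"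
    by (rule integral_cong_AE[rotated 2]) measurable
  then show ?thesis by (simp add: set_lebesgue_integral_def conv_measure_def)
qed

theorem proposition1p1:
  fixes \<rho>1 \<rho>2 :: "real measure" and q1 :: "real \<Rightarrow> real"
  assumes "distr_Rplus \<rho>1"
    and "\<rho>1 = density lborel (\<lambda>x. ennreal (q1 x))"
    and "density_function q1"
    and "continuous_on UNIV q1"
    and "\<exists>K. compact K \<and> (\<forall>x. x \<notin> K \<longrightarrow> q1 x = 0)"
    and "distr_Rplus \<rho>2"
    and "class_S_loc \<rho>2"
  shows "\<rho>1 \<star> \<rho>2 = density lborel (\<lambda>x. ennreal (\<integral>u\<in>{0..x}. q1 (x - u) \<partial>\<rho>2))
     \<and> class_S_d (\<lambda>x. \<integral>u\<in>{0..x}. q1 (x - u) \<partial>\<rho>2)"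
proof -
  have null1: "emeasure \<rho>1 {..<0} = 0" using assms(1) unfolding distr_Rplus_def by simp
  have p2: "prob_space \<rho>2" and s2: "sets \<rho>2 = sets borel" and null2: "emeasure \<rho>2 {..<0} = 0"
    using assms(6) unfolding distr_Rplus_def by auto
  have qm: "q1 \<in> borel_measurable borel" and nonneg: "\<forall>v. 0 \<le> q1 v"
    using assms(3) unfolding density_function_def by auto
  obtain B where supp: "\<forall>v. \<bar>v\<bar> > B \<longrightarrow> q1 v = 0"
    using assms(5) compact_support_bound by blast
  obtain M where M: "\<forall>v. \<bar>q1 v\<bar> \<le> M"
    using continuous_vanishing_outside_bounded[OF assms(4) supp] by blast
  have "\<forall>y<0. q1 y = 0"
    using continuous_density_zero_on_null_open[OF assms(4) nonneg qm open_lessThan] null1 assms(2)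
    by simp
  then have g: "(\<integral>u\<in>{0..x}. q1 (x - u) \<partial>\<rho>2) = conv_measure q1 \<rho>2 x" for x
    using set_integral_Icc_eq_conv_measure[OF qm s2 null2] by blast
  have "\<rho>1 \<star> \<rho>2 = density lborel (\<lambda>x. ennreal (conv_measure q1 \<rho>2 x))"
    unfolding assms(2)
    using density_convolution_eq_density_conv_measure[OF qm M nonneg _ prob_space.finite_measure[OF p2] s2]
      prob_space_density_function[OF assms(3)]
    by (simp add: prob_space.finite_measure)
  moreover have "class_S_d (conv_measure q1 \<rho>2)"
    by (rule conv_measure_class_S_d[OF assms(3,4) supp p2 s2 assms(7)])
  ultimately show ?thesis by (simp add: g)
qed

end
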